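(* Let $X$ be the Fermi surface (at time $0$) of a geodesic observer in anti-de Sitter space-time with cosmological constant $\lambda<0$, identified via global Fermi coordinates with $\mathbb{R}^3$, $\rho=|x|$, with space-time metric $ds^2=-c^2\cosh^2(a\rho)dt^2+d\rho^2+a^{-2}\sinh^2(a\rho)(d\theta^2+\sin^2\theta\,d\phi^2)$, $a=\sqrt{|\lambda|/3}$. For $\beta>0$, $z>0$, particle mass $m>0$ and bounded Borel $\Lambda\subset X$, let the ideal gas partition function be $$Z_\Lambda(\varnothing)=e^{-\beta|\Lambda|\rho_{\text{vac}}}\sum_{n\ge0}\frac{z^n}{n!}\Big(\int_\Lambda\frac{K_2(\gamma(x))}{\gamma(x)}d\mathbf{x}\Big)^n,\qquad \gamma(x)=\beta mc^2\cosh(a\rho),$$ with $\rho_{\text{vac}}=\lambda c^4/(8\pi G)$. Let $\Lambda_k$ be the ball of radius $k$ centered at the origin. Then the infinite volume pressure $P=\lim_{k\to\infty}\frac{\log Z_{\Lambda_k}(\varnothing)}{\beta|\Lambda_k|}$ exists and $$P=-\frac{\lambda c^4}{8\pi G}.$$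
   Context: $K_2$ is the modified Bessel function of the second kind, $c$ is the speed of light and $G$ Newton's gravitational constant. $d\mathbf{x}=dx^1dx^2dx^3$ is Lebesgue measure in the Fermi coordinates, while $|\Lambda|$ denotes the Riemannian volume of $\Lambda$ for the induced metric $d\rho^2+a^{-2}\sinh^2(a\rho)(d\theta^2+\sin^2\theta d\phi^2)$ on $X$ (balls are taken with respect to the radial coordinate $\rho$, which is proper distance from the origin). *)

theory Defs
  imports "HOL-Analysis.Analysis"
begin

definition besselK2 :: "real \<Rightarrow> real" where
  "besselK2 x = (LINT t:{0..}|lborel. exp (- x * cosh t) * cosh (2 * t))"

definition ads_a :: "real \<Rightarrow> real" where
  "ads_a lam = sqrt (\<bar>lam\<bar> / 3)"

text \<open>Density of the Riemannian volume of the metric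
  d rho^2 + a^-2 sinh^2(a rho) (d theta^2 + sin^2 theta d phi^2)
  with respect to Lebesgue measure in the Cartesian Fermi coordinates (rho = |x|):
  (sinh(a rho)/(a rho))^2, extended by 1 at the origin.\<close>
definition ads_vol_density :: "real \<Rightarrow> real \<Rightarrow> real" where
  "ads_vol_density a r = (if r = 0 then 1 else (sinh (a * r) / (a * r))^2)"

definition ads_volume :: "real \<Rightarrow> (real^3) set \<Rightarrow> real" where
  "ads_volume a \<Lambda> = (LINT x:\<Lambda>|lborel. ads_vol_density a (norm x))"

definition rho_vac :: "real \<Rightarrow> real \<Rightarrow> real \<Rightarrow> real" where
  "rho_vac lam c G = lam * c ^ 4 / (8 * pi * G)"

definition ads_gamma :: "real \<Rightarrow> real \<Rightarrow> real \<Rightarrow> real \<Rightarrow> real^3 \<Rightarrow> real" where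
  "ads_gamma a \<beta> m c x = \<beta> * m * c ^ 2 * cosh (a * norm x)"

definition partition_fn ::
  "real \<Rightarrow> real \<Rightarrow> real \<Rightarrow> real \<Rightarrow> real \<Rightarrow> real \<Rightarrow> (real^3) set \<Rightarrow> real" where
  "partition_fn lam c G \<beta> z m \<Lambda> =
     exp (- \<beta> * ads_volume (ads_a lam) \<Lambda> * rho_vac lam c G) *
     (\<Sum>n. z ^ n / fact n *
        (LINT x:\<Lambda>|lborel. besselK2 (ads_gamma (ads_a lam) \<beta> m c x)
                              / ads_gamma (ads_a lam) \<beta> m c x) ^ n)"

end

theory Submission
  imports Defs "HOL-Real_Asymp.Real_Asymp"
begin

text \<open>The partition function of the ideal gas is a pure exponential,
  \<open>Z = exp (- \<beta> |\<Lambda>| \<rho>\<^sub>v\<^sub>a\<^sub>c + z I(\<Lambda>))\<close> with \<open>I(\<Lambda>) = \<integral>\<^sub>\<Lambda> K\<^sub>2(\<gamma>)/\<gamma> dx\<close>, so the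
  pressure is \<open>- \<rho>\<^sub>v\<^sub>a\<^sub>c\<close> plus \<open>z/\<beta>\<close> times \<open>I(\<Lambda>\<^sub>k) / |\<Lambda>\<^sub>k|\<close>. Since \<open>\<gamma> \<ge> \<beta> m c\<^sup>2\<close>, the
  integrand \<open>K\<^sub>2(\<gamma>)/\<gamma>\<close> is bounded and \<open>I(\<Lambda>\<^sub>k)\<close> is at most a constant times the Lebesgue
  volume of the ball. The Riemannian volume \<open>|\<Lambda>\<^sub>k|\<close>, on the other hand, is at least
  \<open>(sinh (a k / 2) / (a k))\<^sup>2\<close> times the Lebesgue volume of the outer shell
  \<open>k/2 \<le> \<rho> < k\<close>, i.e. an exponentially growing factor times that of the ball. So the ideal-gas contribution
  vanishes and only the vacuum energy survives.\<close>

lemma set_integrable_exp_minus: "set_integrable lborel {0::real..} (\<lambda>t. exp (- t))"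
proof -
  have "(\<lambda>t. exp (-1*t)) integrable_on {0::real..}"
    by (rule integrable_on_exp_minus_to_infinity) simp
  then have "(\<lambda>t::real. exp (-t)) absolutely_integrable_on {0..}"
    by (intro nonnegative_absolutely_integrable_1) auto
  moreover have "(\<lambda>t::real. indicator {0..} t *\<^sub>R exp (- t)) \<in> borel_measurable lborel"
    by measurable
  ultimately show ?thesis
    unfolding set_integrable_def by (simp add: integrable_completion)
qed

lemma set_integral_exp_minus: "(LINT t:{0::real..}|lborel. exp (- t)) = 1"
  using set_borel_integral_eq_integral(2)[OF set_integrable_exp_minus]
        has_integral_exp_minus_to_infinity[of 1 0]
  by (simp add: integral_unique)

lemma measure_ball_diff_half_ball:
  fixes c :: "'a::euclidean_space"
  assumes "r \<ge> 0"
  shows "measure lborel (ball c r - ball c (r/2)) = (1 - 1 / 2 ^ DIM('a)) * measure lborel (ball c r)"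
proof -
  have "measure lborel (ball c r - ball c (r/2)) = measure lborel (ball c r) - measure lborel (ball c (r/2))"
    using emeasure_lborel_ball_finite[of c r] assms by (intro measure_Diff) (auto simp: subset_ball)
  also have "\<dots> = (1 - 1 / 2 ^ DIM('a)) * measure lborel (ball c r)"
    using content_ball_conv_unit_ball[of r c] content_ball_conv_unit_ball[of "r/2" c] assms
    by (simp add: field_simps)
  finally show ?thesis .
qed

lemma set_integral_le_const_mult_measure:
  fixes f :: "'a \<Rightarrow> real"
  assumes A: "A \<in> sets M" "emeasure M A < \<infinity>"
    and f: "\<And>x. x \<in> A \<Longrightarrow> 0 \<le> f x" "\<And>x. x \<in> A \<Longrightarrow> f x \<le> B"
  shows "(LINT x:A|M. f x) \<le> B * measure M A"
proof (cases "set_integrable M A f")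
  case True
  have "(LINT x:A|M. f x) \<le> (LINT x:A|M. B)"
    using A f(2) by (intro set_integral_mono[OF True]) (auto simp: set_integrable_def)
  then show ?thesis
    using A by (simp add: set_integral_const mult.commute)
next
  case False
  have "0 \<le> B * measure M A"
  proof (cases "A = {}")
    case False
    then obtain x where "x \<in> A" by blast
    then have "0 \<le> B" using f by (meson order_trans)
    then show ?thesis by simp
  qed simp
  then show ?thesis
    using False by (simp add: set_lebesgue_integral_def set_integrable_def not_integrable_integral_eq)
qed

lemma sinh_le_mult_cosh:
  fixes y :: real
  assumes "0 \<le> y"
  shows "sinh y \<le> y * cosh y"
proof -
  have "(\<lambda>y. y * cosh y - sinh y) 0 \<le> (\<lambda>y. y * cosh y - sinh y) y"
    by (rule DERIV_nonneg_imp_nondecreasing[OF assms])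
       (auto intro!: exI derivative_eq_intros mult_nonneg_nonneg)
  then show ?thesis by simp
qed

lemma besselK2_integrand_le:
  fixes x0 x t :: real
  assumes x0: "0 < x0" and x: "x0 \<le> x" and t: "0 \<le> t"
  shows "exp (- x * cosh t) * cosh (2 * t) \<le> exp (9 / x0) * exp (- t)"
proof -
  have cosh_2t: "cosh (2 * t) \<le> exp (2 * t)"
    unfolding cosh_field_def using t by simp
  have "t\<^sup>2 / 4 \<le> (1 + t + t\<^sup>2 / 2) / 2"
    using t by (simp add: power2_eq_square)
  also have "\<dots> \<le> exp t / 2"
    using exp_lower_Taylor_quadratic[OF t] by simp
  also have "\<dots> \<le> cosh t"
    unfolding cosh_field_def by simp
  finally have cosh_ge: "t\<^sup>2 / 4 \<le> cosh t" .
  have "3 * t - x0 * (t\<^sup>2 / 4) \<le> 9 / x0"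
  proof -
    have "(x0 * t - 6)\<^sup>2 / (4 * x0) = 9 / x0 - (3 * t - x0 * (t\<^sup>2 / 4))"
      using x0 by (simp add: field_simps power2_eq_square)
    moreover have "0 \<le> (x0 * t - 6)\<^sup>2 / (4 * x0)"
      using x0 by simp
    ultimately show ?thesis by linarith
  qed
  moreover have "x0 * (t\<^sup>2 / 4) \<le> x0 * cosh t"
    using cosh_ge x0 by simp
  ultimately have exponent: "2 * t - x0 * cosh t \<le> 9 / x0 - t"
    by linarith
  have "exp (- x * cosh t) * cosh (2 * t) \<le> exp (- x0 * cosh t) * exp (2 * t)"
    using x cosh_real_ge_1[of t] cosh_2t by (intro mult_mono) (auto intro!: mult_right_mono)
  also have "\<dots> = exp (2 * t - x0 * cosh t)"
    by (simp add: exp_add[symmetric])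
  also have "\<dots> \<le> exp (9 / x0 - t)"
    using exponent by simp
  also have "\<dots> = exp (9 / x0) * exp (- t)"
    by (simp add: exp_diff exp_minus field_simps)
  finally show ?thesis .
qed

lemma besselK2_nonneg: "0 \<le> besselK2 x"
  unfolding besselK2_def set_lebesgue_integral_def
  by (intro Bochner_Integration.integral_nonneg) (simp add: indicator_def)

lemma besselK2_le_exp:
  assumes x0: "0 < x0" and x: "x0 \<le> x"
  shows "besselK2 x \<le> exp (9 / x0)"
proof -
  have dominant: "set_integrable lborel {0::real..} (\<lambda>t. exp (9 / x0) * exp (- t))"
    using set_integrable_exp_minus by (rule set_integrable_mult_right)
  have "set_integrable lborel {0::real..} (\<lambda>t. exp (- x * cosh t) * cosh (2 * t))"
  proof (rule set_integrable_bound[OF dominant])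
    show "set_borel_measurable lborel {0..} (\<lambda>t. exp (- x * cosh t) * cosh (2 * t))"
      unfolding set_borel_measurable_def
      by measurable (auto intro!: borel_measurable_continuous_onI continuous_intros)
    show "AE t in lborel. t \<in> {0..} \<longrightarrow>
            norm (exp (- x * cosh t) * cosh (2 * t)) \<le> norm (exp (9 / x0) * exp (- t))"
      using besselK2_integrand_le[OF x0 x] by (intro AE_I2) simp
  qed
  then have "besselK2 x \<le> (LINT t:{0..}|lborel. exp (9 / x0) * exp (- t))"
    unfolding besselK2_def
    by (rule set_integral_mono[OF _ dominant]) (rule besselK2_integrand_le[OF x0 x]; simp)
  also have "\<dots> = exp (9 / x0)"
    by (simp add: set_integral_exp_minus)
  finally show ?thesis .
qed

lemma ads_vol_density_nonneg: "0 \<le> ads_vol_density a r"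
  unfolding ads_vol_density_def by simp

lemma ads_vol_density_le:
  assumes a: "0 < a" and r: "0 \<le> r" "r \<le> k"
  shows "ads_vol_density a r \<le> (cosh (a * k))\<^sup>2"
proof (cases "r = 0")
  case True
  then show ?thesis
    using cosh_real_ge_1[of "a * k"] by (simp add: ads_vol_density_def one_le_power)
next
  case False
  with a r have ar: "0 < a * r" by simp
  have "sinh (a * r) / (a * r) \<le> cosh (a * r)"
    using sinh_le_mult_cosh[of "a * r"] ar by (simp add: divide_le_eq mult.commute)
  then have "(sinh (a * r) / (a * r))\<^sup>2 \<le> (cosh (a * r))\<^sup>2"
    using ar by (intro power_mono) auto
  also have "\<dots> \<le> (cosh (a * k))\<^sup>2"
    using a r by (intro power_mono) (auto simp: cosh_real_nonneg_le_iff mult_left_mono)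
  finally show ?thesis
    using False by (simp add: ads_vol_density_def)
qed

lemma ads_vol_density_ge:
  assumes a: "0 < a" and r: "k / 2 \<le> r" "r \<le> k" and k: "0 < k"
  shows "(sinh (a * k / 2) / (a * k))\<^sup>2 \<le> ads_vol_density a r"
proof -
  from a r k have "r \<noteq> 0" "0 < a * r" by auto
  moreover have "sinh (a * k / 2) / (a * k) \<le> sinh (a * r) / (a * r)"
    using a r k \<open>0 < a * r\<close> by (intro frac_le) (auto simp: mult_left_mono)
  moreover have "0 \<le> sinh (a * k / 2) / (a * k)"
    using a k by simp
  ultimately show ?thesis
    by (simp add: ads_vol_density_def power_mono)
qed

lemma ads_vol_density_measurable:
  "(\<lambda>x::'a::real_normed_vector. ads_vol_density a (norm x)) \<in> borel_measurable borel"
  unfolding ads_vol_density_def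
  by measurable (auto intro!: borel_measurable_continuous_onI continuous_intros)

lemma ads_vol_density_set_integrable_ball:
  assumes "0 < a"
  shows "set_integrable lborel (ball (0::real^3) k) (\<lambda>x. ads_vol_density a (norm x))"
  unfolding set_integrable_def
  using ads_vol_density_le[OF assms] ads_vol_density_nonneg
  by (intro integrableI_bounded_set_indicator[where B = "(cosh (a * k))\<^sup>2"]
        emeasure_lborel_ball_finite AE_I2)
     (auto simp: ads_vol_density_measurable dist_norm)

lemma ads_volume_ball_ge:
  assumes a: "0 < a" and r: "0 < r"
  shows "(sinh (a * r / 2) / (a * r))\<^sup>2 * (7 / 8 * measure lborel (ball (0::real^3) r))
           \<le> ads_volume a (ball 0 r)"
proof -
  define A where "A = ball (0::real^3) r - ball 0 (r / 2)"
  define D where "D = (sinh (a * r / 2) / (a * r))\<^sup>2"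
  have "emeasure lborel A \<le> emeasure lborel (ball (0::real^3) r)"
    unfolding A_def by (intro emeasure_mono) auto
  then have A_finite: "emeasure lborel A < \<infinity>"
    using emeasure_lborel_ball_finite[of "0::real^3" r] by (simp add: order_le_less_trans)
  have "D * (7 / 8 * measure lborel (ball (0::real^3) r)) = D * measure lborel A"
    using measure_ball_diff_half_ball[of r "0::real^3"] r by (simp add: A_def)
  also have "\<dots> = integral\<^sup>L lborel (\<lambda>x. D * indicator A x)"
    by simp
  also have "\<dots> \<le> integral\<^sup>L lborel (\<lambda>x. indicator (ball (0::real^3) r) x *\<^sub>R ads_vol_density a (norm x))"
  proof (rule Bochner_Integration.integral_mono)
    show "integrable lborel (\<lambda>x. D * indicator A x)"
      using A_finite by (intro integrable_mult_right integrable_real_indicator) (auto simp: A_def)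
    show "integrable lborel (\<lambda>x. indicator (ball (0::real^3) r) x *\<^sub>R ads_vol_density a (norm x))"
      using ads_vol_density_set_integrable_ball[OF a, of r] unfolding set_integrable_def .
    show "D * indicator A x \<le> indicator (ball 0 r) x *\<^sub>R ads_vol_density a (norm x)" for x
    proof (cases "x \<in> A")
      case True
      then have "r / 2 \<le> norm x" "norm x \<le> r"
        by (auto simp: A_def)
      then show ?thesis
        using True ads_vol_density_ge[OF a _ _ r] by (auto simp: A_def D_def)
    qed (auto simp: ads_vol_density_nonneg indicator_def)
  qed
  also have "\<dots> = ads_volume a (ball 0 r)"
    unfolding ads_volume_def set_lebesgue_integral_def ..
  finally show ?thesis
    unfolding D_def .
qed

lemma ads_volume_ball_pos:
  assumes "0 < a" "0 < r"
  shows "0 < ads_volume a (ball (0::real^3) r)"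
proof -
  have "0 < (sinh (a * r / 2) / (a * r))\<^sup>2 * (7 / 8 * measure lborel (ball (0::real^3) r))"
    using assms content_ball_pos[of r "0::real^3"] by simp
  then show ?thesis
    using ads_volume_ball_ge[OF assms] by linarith
qed

definition one_particle_integral :: "real \<Rightarrow> real \<Rightarrow> real \<Rightarrow> real \<Rightarrow> (real^3) set \<Rightarrow> real" where
  "one_particle_integral a \<beta> m c \<Lambda> =
     (LINT x:\<Lambda>|lborel. besselK2 (ads_gamma a \<beta> m c x) / ads_gamma a \<beta> m c x)"

lemma one_particle_integral_nonneg:
  assumes "0 < \<beta> * m * c\<^sup>2"
  shows "0 \<le> one_particle_integral a \<beta> m c \<Lambda>"
  unfolding one_particle_integral_def set_lebesgue_integral_def ads_gamma_def
  using assms cosh_real_ge_1 besselK2_nonneg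
  by (intro Bochner_Integration.integral_nonneg) (simp add: indicator_def)

lemma one_particle_integral_ball_le:
  assumes x0: "0 < \<beta> * m * c\<^sup>2"
  shows "one_particle_integral a \<beta> m c (ball 0 r)
           \<le> exp (9 / (\<beta> * m * c\<^sup>2)) / (\<beta> * m * c\<^sup>2) * measure lborel (ball (0::real^3) r)"
  unfolding one_particle_integral_def
proof (rule set_integral_le_const_mult_measure)
  fix x :: "real^3"
  let ?x0 = "\<beta> * m * c\<^sup>2" and ?\<gamma> = "ads_gamma a \<beta> m c x"
  have \<gamma>: "?x0 \<le> ?\<gamma>"
    using x0 cosh_real_ge_1[of "a * norm x"] unfolding ads_gamma_def
    by (simp add: mult_le_cancel_left1)
  then show "0 \<le> besselK2 ?\<gamma> / ?\<gamma>"
    using x0 besselK2_nonneg by simp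
  have "besselK2 ?\<gamma> / ?\<gamma> \<le> exp (9 / ?x0) / ?\<gamma>"
    using besselK2_le_exp[OF x0 \<gamma>] x0 \<gamma> by (intro divide_right_mono) auto
  also have "\<dots> \<le> exp (9 / ?x0) / ?x0"
    using x0 \<gamma> by (intro divide_left_mono) auto
  finally show "besselK2 ?\<gamma> / ?\<gamma> \<le> exp (9 / ?x0) / ?x0" .
qed (use emeasure_lborel_ball_finite in auto)

lemma one_particle_integral_over_ads_volume_tendsto_0:
  assumes a: "0 < a" and x0: "0 < \<beta> * m * c\<^sup>2"
  shows "(\<lambda>k::nat. one_particle_integral a \<beta> m c (ball 0 (real k)) / ads_volume a (ball 0 (real k)))
           \<longlonglongrightarrow> 0"
proof -
  define B where "B = exp (9 / (\<beta> * m * c\<^sup>2)) / (\<beta> * m * c\<^sup>2)"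
  define D where "D = (\<lambda>r::real. (sinh (a * r / 2) / (a * r))\<^sup>2)"
  have D_at_top: "filterlim (\<lambda>k::nat. D (real k)) at_top sequentially"
    unfolding D_def using a by real_asymp
  have bounds: "0 \<le> one_particle_integral a \<beta> m c (ball 0 r) / ads_volume a (ball 0 r)
       \<and> one_particle_integral a \<beta> m c (ball 0 r) / ads_volume a (ball 0 r) \<le> 8 * B / 7 * inverse (D r)"
    if r: "0 < r" for r
  proof -
    let ?I = "one_particle_integral a \<beta> m c (ball 0 r)" and ?\<mu> = "measure lborel (ball (0::real^3) r)"
    have \<mu>: "0 < ?\<mu>"
      using content_ball_pos[OF r] by simp
    have D: "0 < D r"
      unfolding D_def using a r by simp
    have V: "D r * (7 / 8 * ?\<mu>) \<le> ads_volume a (ball 0 r)"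
      unfolding D_def by (rule ads_volume_ball_ge[OF a r])
    have I: "0 \<le> ?I" "?I \<le> B * ?\<mu>"
      unfolding B_def by (rule one_particle_integral_nonneg[OF x0], rule one_particle_integral_ball_le[OF x0])
    have "0 \<le> ?I / ads_volume a (ball 0 r)"
      using I(1) ads_volume_ball_pos[OF a r] by simp
    moreover have "?I / ads_volume a (ball 0 r) \<le> B * ?\<mu> / (D r * (7 / 8 * ?\<mu>))"
      using I V D \<mu> by (intro frac_le) auto
    moreover have "B * ?\<mu> / (D r * (7 / 8 * ?\<mu>)) = 8 * B / 7 * inverse (D r)"
      using \<mu> by (simp add: field_simps)
    ultimately show ?thesis
      by (intro conjI) linarith+
  qed
  have upper: "(\<lambda>k::nat. 8 * B / 7 * inverse (D (real k))) \<longlonglongrightarrow> 0"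
    using tendsto_mult_right_zero[OF tendsto_inverse_0_at_top[OF D_at_top]] by simp
  show ?thesis
  proof (rule tendsto_sandwich[OF _ _ tendsto_const upper])
    show "\<forall>\<^sub>F k in sequentially. 0 \<le> one_particle_integral a \<beta> m c (ball 0 (real k)) / ads_volume a (ball 0 (real k))"
      using bounds by (intro eventually_sequentiallyI[of 1]) simp
    show "\<forall>\<^sub>F k in sequentially. one_particle_integral a \<beta> m c (ball 0 (real k)) / ads_volume a (ball 0 (real k)) \<le> 8 * B / 7 * inverse (D (real k))"
      using bounds by (intro eventually_sequentiallyI[of 1]) simp
  qed
qed

lemma ads_a_pos: "lam < 0 \<Longrightarrow> 0 < ads_a lam"
  unfolding ads_a_def by simp

lemma partition_fn_eq_exp:
  "partition_fn lam c G \<beta> z m \<Lambda> =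
     exp (- \<beta> * ads_volume (ads_a lam) \<Lambda> * rho_vac lam c G
          + z * one_particle_integral (ads_a lam) \<beta> m c \<Lambda>)"
proof -
  let ?I = "one_particle_integral (ads_a lam) \<beta> m c \<Lambda>"
  have "(\<lambda>n. z ^ n / fact n * ?I ^ n) sums exp (z * ?I)"
    using exp_converges[of "z * ?I"] by (simp add: power_mult_distrib field_simps)
  then have "(\<Sum>n. z ^ n / fact n * ?I ^ n) = exp (z * ?I)"
    by (rule sums_unique[symmetric])
  then show ?thesis
    unfolding partition_fn_def one_particle_integral_def by (simp add: mult_exp_exp)
qed

theorem corollary2:
  fixes lam c G \<beta> z m :: real
  assumes "lam < 0" and "c > 0" and "G > 0" and "\<beta> > 0" and "z > 0" and "m > 0"
  shows "(\<lambda>k::nat. ln (partition_fn lam c G \<beta> z m (ball 0 (real k)))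
                   / (\<beta> * ads_volume (ads_a lam) (ball 0 (real k))))
         \<longlonglongrightarrow> - (lam * c ^ 4 / (8 * pi * G))"
proof -
  define I where "I = (\<lambda>k::nat. one_particle_integral (ads_a lam) \<beta> m c (ball 0 (real k)))"
  define V where "V = (\<lambda>k::nat. ads_volume (ads_a lam) (ball 0 (real k)))"
  have a: "0 < ads_a lam" and x0: "0 < \<beta> * m * c\<^sup>2"
    using assms by (simp_all add: ads_a_pos)
  have "\<forall>\<^sub>F k in sequentially. - rho_vac lam c G + z / \<beta> * (I k / V k)
          = ln (partition_fn lam c G \<beta> z m (ball 0 (real k))) / (\<beta> * V k)"
  proof (rule eventually_sequentiallyI[of 1])
    fix k :: nat
    assume "1 \<le> k"
    then show "- rho_vac lam c G + z / \<beta> * (I k / V k)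
          = ln (partition_fn lam c G \<beta> z m (ball 0 (real k))) / (\<beta> * V k)"
      using ads_volume_ball_pos[OF a, of "real k"] \<open>\<beta> > 0\<close>
      by (simp add: partition_fn_eq_exp I_def V_def field_simps)
  qed
  moreover have "(\<lambda>k. - rho_vac lam c G + z / \<beta> * (I k / V k)) \<longlonglongrightarrow> - rho_vac lam c G + z / \<beta> * 0"
    unfolding I_def V_def
    by (intro tendsto_intros one_particle_integral_over_ads_volume_tendsto_0[OF a x0])
  ultimately show ?thesis
    unfolding V_def rho_vac_def by (simp add: Lim_transform_eventually)
qed

end
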